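(* Let $\Delta$ be a compact Hausdorff space, $u\colon\Delta\to\mathbb R$ continuous, $v\colon\Delta\to\mathbb R$ upper semicontinuous, and define $$f(\alpha)=\max_{\bm w\in\Delta}\{v(\bm w):u(\bm w)=\alpha\},\qquad \tau(q)=\min_{\bm w\in\Delta}\{q\,u(\bm w)-v(\bm w)\}$$ (the maximum over the empty set being $-\infty$). Then $f(\alpha)\le\tau^*(\alpha)$ for all $\alpha\in\mathbb R$, and if $\tau$ is supported at $(q,\alpha)$ for some $q\in\mathbb R$ then $f(\alpha)=q\alpha-\tau(q)=\tau^*(\alpha)$. Moreover the following are equivalent: (i) for all $q\in\mathbb R$ and all $\alpha\in\partial\tau(q)$, $\tau$ is supported at $(q,\alpha)$; (ii) $f(\alpha)=\tau^*(\alpha)$ for all $\alpha\in\mathbb R$; (iii) $f$ is a concave function.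
   Context: For $g\colon\mathbb R\to\mathbb R\cup\{-\infty\}$, the concave conjugate is $g^*(\alpha)=\inf_{q\in\mathbb R}(q\alpha-g(q))$. For concave $g$, $\partial g(q)=\{\alpha:\alpha(y-q)+g(q)\ge g(y)\ \forall y\in\mathbb R\}=[\partial^+g(q),\partial^-g(q)]$, where $\partial^\pm g(q)$ are the right/left derivatives. $\tau$ is supported at $(q,\alpha)$ if there is $\bm w\in\Delta$ with $\tau(q)=q\,u(\bm w)-v(\bm w)$ and $u(\bm w)=\alpha$. *)

theory Defs
  imports "HOL-Analysis.Analysis"
begin

definition usc_map :: "'a topology \<Rightarrow> ('a \<Rightarrow> real) \<Rightarrow> bool" where
  "usc_map X v \<longleftrightarrow> (\<forall>a. openin X {x \<in> topspace X. v x < a})"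

definition f_fun :: "'a topology \<Rightarrow> ('a \<Rightarrow> real) \<Rightarrow> ('a \<Rightarrow> real) \<Rightarrow> real \<Rightarrow> ereal" where
  "f_fun X u v \<alpha> = Sup ((\<lambda>w. ereal (v w)) ` {w \<in> topspace X. u w = \<alpha>})"

definition tau :: "'a topology \<Rightarrow> ('a \<Rightarrow> real) \<Rightarrow> ('a \<Rightarrow> real) \<Rightarrow> real \<Rightarrow> real" where
  "tau X u v q = Inf ((\<lambda>w. q * u w - v w) ` topspace X)"

definition concave_conj :: "(real \<Rightarrow> ereal) \<Rightarrow> real \<Rightarrow> ereal" where
  "concave_conj g \<alpha> = (INF q. ereal (q * \<alpha>) - g q)"

definition superdiff :: "(real \<Rightarrow> real) \<Rightarrow> real \<Rightarrow> real set" where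
  "superdiff g q = {\<alpha>. \<forall>y. \<alpha> * (y - q) + g q \<ge> g y}"

definition supported :: "'a topology \<Rightarrow> ('a \<Rightarrow> real) \<Rightarrow> ('a \<Rightarrow> real) \<Rightarrow> real \<Rightarrow> real \<Rightarrow> bool" where
  "supported X u v q \<alpha> \<longleftrightarrow>
     (\<exists>w \<in> topspace X. tau X u v q = q * u w - v w \<and> u w = \<alpha>)"

text \<open>Concavity of an extended-real-valued function R -> R u {-infinity}
  (with the usual ereal arithmetic, -infinity absorbs finite summands).\<close>
definition concave_ereal :: "(real \<Rightarrow> ereal) \<Rightarrow> bool" where
  "concave_ereal g \<longleftrightarrow>
     (\<forall>x y t. 0 \<le> t \<longrightarrow> t \<le> 1 \<longrightarrow>
        ereal t * g x + ereal (1 - t) * g y \<le> g (t * x + (1 - t) * y))"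

end

theory Submission
  imports Defs
begin

text \<open>Everything rests on one compactness fact: an upper semicontinuous function attains its
  maximum on a nonempty closed subset of a compact space. Hence \<open>\<tau>\<close> is attained, \<open>f\<close> is attained
  wherever it is finite, and \<open>f \<le> \<tau>\<^sup>*\<close> is immediate. If \<open>\<alpha> \<in> \<partial>\<tau>(q)\<close>, comparing \<open>\<tau>\<close> at \<open>q\<close>
  with \<open>\<tau>\<close> at \<open>q \<pm> d\<close> for small \<open>d\<close> produces minimizers at \<open>q\<close> with \<open>u \<le> \<alpha>\<close> and with
  \<open>u \<ge> \<alpha>\<close>; concavity of \<open>f\<close> interpolates between them, giving \<open>f(\<alpha>) \<ge> q\<alpha> - \<tau>(q) = \<tau>\<^sup>*(\<alpha>)\<close>.
  If instead the infimum defining \<open>\<tau>\<^sup>*(\<alpha>)\<close> is not attained, it is approached only as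
  \<open>|q| \<rightarrow> \<infinity>\<close>, and minimizers at such slopes have \<open>u\<close> close to \<open>\<alpha>\<close> and \<open>v\<close> almost
  \<open>\<tau>\<^sup>*(\<alpha>)\<close>; a limit point gives \<open>f(\<alpha>) \<ge> \<tau>\<^sup>*(\<alpha>)\<close> without any hypothesis.\<close>

lemma usc_map_add:
  assumes "usc_map X f" and "usc_map X g"
  shows "usc_map X (\<lambda>x. f x + g x)"
  unfolding usc_map_def
proof
  fix a
  have "{x \<in> topspace X. f x + g x < a}
      = (\<Union>r. {x \<in> topspace X. f x < r} \<inter> {x \<in> topspace X. g x < a - r})"
  proof (intro equalityI subsetI)
    fix x assume "x \<in> {x \<in> topspace X. f x + g x < a}"
    then show "x \<in> (\<Union>r. {x \<in> topspace X. f x < r} \<inter> {x \<in> topspace X. g x < a - r})"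
      by (auto intro!: exI[of _ "(a + f x - g x) / 2"] simp: field_simps)
  qed auto
  moreover have "openin X (\<Union>r. {x \<in> topspace X. f x < r} \<inter> {x \<in> topspace X. g x < a - r})"
    using assms unfolding usc_map_def by (intro openin_Union) (auto simp: openin_Int)
  ultimately show "openin X {x \<in> topspace X. f x + g x < a}"
    by simp
qed

lemma usc_map_min:
  assumes "usc_map X f" and "usc_map X g"
  shows "usc_map X (\<lambda>x. min (f x) (g x))"
proof -
  have "{x \<in> topspace X. min (f x) (g x) < a}
      = {x \<in> topspace X. f x < a} \<union> {x \<in> topspace X. g x < a}" for a
    by auto
  then show ?thesis
    using assms by (auto simp: usc_map_def)
qed

lemma continuous_map_imp_usc_map:
  "continuous_map X euclideanreal f \<Longrightarrow> usc_map X f"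
  by (simp add: usc_map_def continuous_map_upper_lower_semicontinuous_lt)

lemma usc_map_closedin_ge:
  assumes "usc_map X f"
  shows "closedin X {x \<in> topspace X. a \<le> f x}"
proof -
  have "{x \<in> topspace X. a \<le> f x} = topspace X - {x \<in> topspace X. f x < a}"
    by auto
  then show ?thesis
    using assms by (simp add: usc_map_def closedin_diff)
qed

lemma usc_map_attains_max:
  assumes "compact_space X" and "usc_map X f" and "closedin X S" and "S \<noteq> {}"
  shows "\<exists>x\<in>S. \<forall>y\<in>S. f y \<le> f x"
proof -
  define K where "K y = {x \<in> topspace X. f y \<le> f x}" for y
  have "compactin X S"
    using assms(1,3) closedin_compact_space by blast
  moreover have "\<forall>C \<in> K ` S. closedin X C"
    using usc_map_closedin_ge[OF assms(2)] by (simp add: K_def)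
  moreover have "S \<inter> \<Inter>\<F> \<noteq> {}" if F: "finite \<F>" "\<F> \<subseteq> K ` S" for \<F>
  proof -
    obtain Y where Y: "Y \<subseteq> S" "finite Y" "\<F> = K ` Y"
      using finite_subset_image[OF F] by blast
    show ?thesis
    proof (cases "Y = {}")
      case True
      then show ?thesis
        using Y(3) assms(4) by simp
    next
      case False
      have "Max (f ` Y) \<in> f ` Y"
        using False Y(2) by simp
      then obtain y0 where y0: "y0 \<in> Y" "f y0 = Max (f ` Y)"
        by auto
      have "y0 \<in> topspace X"
        using y0(1) Y(1) closedin_subset[OF assms(3)] by blast
      moreover have "f y \<le> f y0" if "y \<in> Y" for y
        using that y0(2) Y(2) by simp
      ultimately have "y0 \<in> S \<inter> \<Inter>\<F>"
        using y0(1) Y by (auto simp: K_def)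
      then show ?thesis
        by blast
    qed
  qed
  ultimately have "S \<inter> \<Inter>(K ` S) \<noteq> {}"
    by (simp add: compactin_fip)
  then show ?thesis
    by (auto simp: K_def)
qed

lemma usc_map_ge_if_approx:
  assumes "compact_space X" and "usc_map X f"
    and approx: "\<And>e. e > 0 \<Longrightarrow> \<exists>x\<in>topspace X. c - e \<le> f x"
  shows "\<exists>x\<in>topspace X. c \<le> f x"
proof -
  have "topspace X \<noteq> {}"
    using approx[of 1] by auto
  then obtain x where x: "x \<in> topspace X" "\<forall>y\<in>topspace X. f y \<le> f x"
    using usc_map_attains_max[OF assms(1,2)] by blast
  have "c \<le> f x + e" if "e > 0" for e
    using approx[OF that] x(2) by force
  then show ?thesis
    using x(1) field_le_epsilon by blast
qed

lemma concave_conj_eq_INF: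
  "concave_conj (\<lambda>q. ereal (g q)) \<alpha> = (INF q. ereal (q * \<alpha> - g q))"
  by (simp add: concave_conj_def)

lemma concave_conj_le:
  "concave_conj (\<lambda>q. ereal (g q)) \<alpha> \<le> ereal (q * \<alpha> - g q)"
  unfolding concave_conj_eq_INF by (rule INF_lower) simp

lemma superdiff_iff:
  "\<alpha> \<in> superdiff g q \<longleftrightarrow> (\<forall>y. q * \<alpha> - g q \<le> y * \<alpha> - g y)"
  unfolding superdiff_def by (auto simp: algebra_simps)

lemma superdiff_iff_concave_conj:
  "\<alpha> \<in> superdiff g q \<longleftrightarrow> concave_conj (\<lambda>q. ereal (g q)) \<alpha> = ereal (q * \<alpha> - g q)"
proof
  assume "\<alpha> \<in> superdiff g q"
  then have "ereal (q * \<alpha> - g q) \<le> concave_conj (\<lambda>q. ereal (g q)) \<alpha>"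
    unfolding superdiff_iff concave_conj_eq_INF by (auto intro: INF_greatest)
  then show "concave_conj (\<lambda>q. ereal (g q)) \<alpha> = ereal (q * \<alpha> - g q)"
    using concave_conj_le by (rule antisym[rotated])
next
  assume "concave_conj (\<lambda>q. ereal (g q)) \<alpha> = ereal (q * \<alpha> - g q)"
  then show "\<alpha> \<in> superdiff g q"
    unfolding superdiff_iff using concave_conj_le[of g \<alpha>] by (metis ereal_less_eq(3))
qed

lemma concave_ereal_concave_conj:
  "concave_ereal (concave_conj (\<lambda>q. ereal (g q)))"
  unfolding concave_ereal_def
proof (intro allI impI)
  fix x y t :: real
  assume t: "0 \<le> t" "t \<le> 1"
  let ?c = "concave_conj (\<lambda>q. ereal (g q))"
  show "ereal t * ?c x + ereal (1 - t) * ?c y \<le> ?c (t * x + (1 - t) * y)"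
    unfolding concave_conj_eq_INF[of g "t * x + (1 - t) * y"]
  proof (rule INF_greatest)
    fix q
    have "ereal t * ?c x \<le> ereal t * ereal (q * x - g q)"
      by (rule ereal_mult_left_mono[OF concave_conj_le]) (use t in simp)
    moreover have "ereal (1 - t) * ?c y \<le> ereal (1 - t) * ereal (q * y - g q)"
      by (rule ereal_mult_left_mono[OF concave_conj_le]) (use t in simp)
    moreover have "ereal t * ereal (q * x - g q) + ereal (1 - t) * ereal (q * y - g q)
        = ereal (q * (t * x + (1 - t) * y) - g q)"
      by (simp add: algebra_simps)
    ultimately show "ereal t * ?c x + ereal (1 - t) * ?c y \<le> ereal (q * (t * x + (1 - t) * y) - g q)"
      by (metis add_mono)
  qed
qed

lemma concave_ereal_ge_affine_between:
  assumes F: "concave_ereal F" and x: "a \<le> x" "x \<le> b"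
    and a: "ereal (m * a + k) \<le> F a" and b: "ereal (m * b + k) \<le> F b"
  shows "ereal (m * x + k) \<le> F x"
proof (cases "a = b")
  case True
  then show ?thesis
    using x a by simp
next
  case False
  define t where "t = (b - x) / (b - a)"
  have t: "0 \<le> t" "t \<le> 1"
    using x False by (auto simp: t_def field_simps)
  have "t * (b - a) = b - x"
    using False by (simp add: t_def)
  then have x_eq: "t * a + (1 - t) * b = x"
    by (simp add: algebra_simps)
  have "ereal (m * x + k) = ereal t * ereal (m * a + k) + ereal (1 - t) * ereal (m * b + k)"
    by (simp flip: x_eq add: algebra_simps)
  also have "\<dots> \<le> ereal t * F a + ereal (1 - t) * F b"
    using t by (intro add_mono ereal_mult_left_mono a b) simp_all
  also have "\<dots> \<le> F x"
    using F t unfolding concave_ereal_def by (metis x_eq)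
  finally show ?thesis .
qed

definition tau_minimizer :: "'a topology \<Rightarrow> ('a \<Rightarrow> real) \<Rightarrow> ('a \<Rightarrow> real) \<Rightarrow> real \<Rightarrow> 'a \<Rightarrow> bool" where
  "tau_minimizer X u v q w \<longleftrightarrow> w \<in> topspace X \<and> tau X u v q = q * u w - v w"

lemma f_fun_ge:
  "w \<in> topspace X \<Longrightarrow> ereal (v w) \<le> f_fun X u v (u w)"
  unfolding f_fun_def by (rule SUP_upper) simp

locale compact_usc =
  fixes X :: "'a topology" and u v :: "'a \<Rightarrow> real"
  assumes compact: "compact_space X" and nonempty: "topspace X \<noteq> {}"
    and u_continuous: "continuous_map X euclideanreal u" and v_usc: "usc_map X v"
begin

lemma u_bounded: "\<exists>B. \<forall>w\<in>topspace X. \<bar>u w\<bar> \<le> B"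
proof -
  have "compactin euclideanreal (u ` topspace X)"
    by (rule image_compactin[OF _ u_continuous]) (use compact in \<open>simp add: compact_space_def\<close>)
  then have "bounded (u ` topspace X)"
    by (simp add: compact_imp_bounded)
  then show ?thesis
    by (auto simp: bounded_real)
qed

lemma usc_map_v_minus_linear: "usc_map X (\<lambda>w. v w - q * u w)"
proof -
  have "usc_map X (\<lambda>w. - (q * u w))"
    by (intro continuous_map_imp_usc_map continuous_intros u_continuous)
  from usc_map_add[OF v_usc this] show ?thesis
    by simp
qed

lemma tau_attained:
  obtains w where "tau_minimizer X u v q w" and "\<And>w'. w' \<in> topspace X \<Longrightarrow> tau X u v q \<le> q * u w' - v w'"
proof -
  obtain w where w: "w \<in> topspace X" "\<forall>w'\<in>topspace X. q * u w - v w \<le> q * u w' - v w'"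
    using usc_map_attains_max[OF compact usc_map_v_minus_linear closedin_topspace nonempty, of q]
    by (auto simp: algebra_simps)
  then have "tau X u v q = q * u w - v w"
    unfolding tau_def by (intro cInf_eq_minimum) auto
  with w that show thesis
    by (auto simp: tau_minimizer_def)
qed

lemma tau_le: "w \<in> topspace X \<Longrightarrow> tau X u v q \<le> q * u w - v w"
  using tau_attained by blast

lemma ex_tau_minimizer: "\<exists>w. tau_minimizer X u v q w"
  using tau_attained by blast

lemma continuous_on_tau: "continuous_on S (tau X u v)"
proof -
  obtain B where B: "\<forall>w\<in>topspace X. \<bar>u w\<bar> \<le> B"
    using u_bounded by blast
  have B0: "0 \<le> B"
    using B nonempty by (meson abs_ge_zero ex_in_conv order_trans)
  have tau_diff: "tau X u v q - tau X u v q' \<le> B * \<bar>q - q'\<bar>" for q q'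
  proof -
    obtain w where w: "tau_minimizer X u v q' w"
      using ex_tau_minimizer by blast
    then have "tau X u v q - tau X u v q' \<le> (q - q') * u w"
      using tau_le[of w q] by (simp add: tau_minimizer_def algebra_simps)
    also have "\<dots> \<le> \<bar>q - q'\<bar> * \<bar>u w\<bar>"
      by (metis abs_ge_self abs_mult)
    also have "\<dots> \<le> \<bar>q - q'\<bar> * B"
      using B w by (simp add: mult_left_mono tau_minimizer_def)
    finally show ?thesis
      by (simp add: mult.commute)
  qed
  have "\<bar>tau X u v q - tau X u v q'\<bar> \<le> B * \<bar>q - q'\<bar>" for q q'
    using tau_diff[of q q'] tau_diff[of q' q] by (simp add: abs_le_iff abs_minus_commute)
  then have "B-lipschitz_on S (tau X u v)"
    using B0 by (intro lipschitz_onI) (simp_all add: dist_real_def)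
  then show ?thesis
    by (rule lipschitz_on_continuous_on)
qed

lemma f_fun_le_concave_conj: "f_fun X u v \<alpha> \<le> concave_conj (\<lambda>q. ereal (tau X u v q)) \<alpha>"
  unfolding f_fun_def concave_conj_eq_INF
proof (intro SUP_least INF_greatest)
  fix w q
  assume "w \<in> {w \<in> topspace X. u w = \<alpha>}"
  then show "ereal (v w) \<le> ereal (q * \<alpha> - tau X u v q)"
    using tau_le[of w q] by auto
qed

lemma f_fun_eq_if_supported:
  assumes "supported X u v q \<alpha>"
  shows "f_fun X u v \<alpha> = ereal (q * \<alpha> - tau X u v q)"
    and "ereal (q * \<alpha> - tau X u v q) = concave_conj (\<lambda>q. ereal (tau X u v q)) \<alpha>"
proof -
  obtain w where w: "w \<in> topspace X" "tau X u v q = q * u w - v w" "u w = \<alpha>"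
    using assms unfolding supported_def by blast
  have "ereal (q * \<alpha> - tau X u v q) \<le> f_fun X u v \<alpha>"
    using f_fun_ge[where u = u and v = v, OF w(1)] w by simp
  moreover note f_fun_le_concave_conj[of \<alpha>]
  moreover note concave_conj_le[of "tau X u v" \<alpha> q]
  ultimately show "f_fun X u v \<alpha> = ereal (q * \<alpha> - tau X u v q)"
    and "ereal (q * \<alpha> - tau X u v q) = concave_conj (\<lambda>q. ereal (tau X u v q)) \<alpha>"
    by (meson antisym order_trans)+
qed

lemma f_fun_attained:
  assumes "f_fun X u v \<alpha> = ereal L"
  shows "\<exists>w\<in>topspace X. u w = \<alpha> \<and> v w = L"
proof -
  let ?S = "{w \<in> topspace X. u w \<in> {\<alpha>}}"
  have "?S \<noteq> {}"
  proof
    assume "?S = {}"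
    then have "{w \<in> topspace X. u w = \<alpha>} = {}"
      by simp
    then have "f_fun X u v \<alpha> = Sup {}"
      unfolding f_fun_def by (metis image_empty)
    then have "f_fun X u v \<alpha> = -\<infinity>"
      by (simp add: bot_ereal_def)
    with assms show False
      by simp
  qed
  moreover have "closedin X ?S"
    by (rule closedin_continuous_map_preimage[OF u_continuous]) simp
  ultimately obtain w where w: "w \<in> ?S" "\<forall>w'\<in>?S. v w' \<le> v w"
    using usc_map_attains_max[OF compact v_usc] by blast
  then have "f_fun X u v \<alpha> = ereal (v w)"
    unfolding f_fun_def by (intro antisym SUP_least SUP_upper2[of w]) auto
  then show ?thesis
    using assms w(1) by auto
qed

lemma tau_gap_on_sublevel:
  assumes "\<And>w. tau_minimizer X u v q w \<Longrightarrow> \<alpha> < u w"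
  shows "\<exists>c>0. \<forall>w\<in>topspace X. u w \<le> \<alpha> \<longrightarrow> tau X u v q + c \<le> q * u w - v w"
proof (cases "{w \<in> topspace X. u w \<in> {..\<alpha>}} = {}")
  case True
  then show ?thesis
    by (intro exI[of _ 1]) auto
next
  case False
  have "closedin X {w \<in> topspace X. u w \<in> {..\<alpha>}}"
    by (rule closedin_continuous_map_preimage[OF u_continuous]) simp
  then obtain w0 where w0: "w0 \<in> topspace X" "u w0 \<le> \<alpha>"
      "\<forall>w\<in>topspace X. u w \<le> \<alpha> \<longrightarrow> v w - q * u w \<le> v w0 - q * u w0"
    using usc_map_attains_max[OF compact usc_map_v_minus_linear[of q] _ False] by auto
  then have "\<not> tau_minimizer X u v q w0"
    using assms by force
  then have "tau X u v q < q * u w0 - v w0"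
    using tau_le[OF w0(1), of q] w0(1) by (auto simp: tau_minimizer_def)
  then show ?thesis
    using w0 by (intro exI[of _ "q * u w0 - v w0 - tau X u v q"]) force
qed

lemma ex_tau_minimizer_le_superdiff:
  assumes "\<alpha> \<in> superdiff (tau X u v) q"
  shows "\<exists>w. tau_minimizer X u v q w \<and> u w \<le> \<alpha>"
proof (rule ccontr)
  assume "\<not> ?thesis"
  then obtain c where c: "c > 0"
      "\<And>w. w \<in> topspace X \<Longrightarrow> u w \<le> \<alpha> \<Longrightarrow> tau X u v q + c \<le> q * u w - v w"
    using tau_gap_on_sublevel[of q \<alpha>] by force
  obtain B where B: "\<forall>w\<in>topspace X. \<bar>u w\<bar> \<le> B"
    using u_bounded by blast
  define d where "d = c / (\<bar>\<alpha>\<bar> + \<bar>B\<bar> + 1)"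
  have d: "d > 0" "d * (\<bar>\<alpha>\<bar> + \<bar>B\<bar>) < c"
    using c(1) by (auto simp: d_def field_simps)
  obtain w where w: "tau_minimizer X u v (q + d) w"
    using ex_tau_minimizer by blast
  then have w_top: "w \<in> topspace X" and tau_qd: "tau X u v (q + d) = (q * u w - v w) + d * u w"
    by (auto simp: tau_minimizer_def algebra_simps)
  have "tau X u v q + d * \<alpha> < tau X u v (q + d)"
  proof (cases "\<alpha> < u w")
    case True
    then have "d * \<alpha> < d * u w"
      using d(1) by simp
    then show ?thesis
      using tau_qd tau_le[OF w_top, of q] by linarith
  next
    case False
    have "d * (\<alpha> - u w) \<le> d * (\<bar>\<alpha>\<bar> + \<bar>B\<bar>)"
      using B w_top d(1) by (intro mult_left_mono) (auto simp: abs_le_iff)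
    then have "d * \<alpha> < c + d * u w"
      using d(2) by (simp add: right_diff_distrib)
    then show ?thesis
      using tau_qd c(2)[OF w_top] False by linarith
  qed
  moreover have "tau X u v (q + d) \<le> \<alpha> * ((q + d) - q) + tau X u v q"
    using assms unfolding superdiff_def by blast
  ultimately show False
    by (simp add: mult.commute)
qed

lemma compact_usc_uminus: "compact_usc X (\<lambda>w. - u w) v"
  using compact nonempty u_continuous v_usc
  by unfold_locales (auto intro: continuous_intros)

lemma ex_tau_minimizer_ge_superdiff:
  assumes "\<alpha> \<in> superdiff (tau X u v) q"
  shows "\<exists>w. tau_minimizer X u v q w \<and> \<alpha> \<le> u w"
proof -
  interpret reflected: compact_usc X "\<lambda>w. - u w" v
    by (rule compact_usc_uminus)
  have tau_reflected: "tau X (\<lambda>w. - u w) v p = tau X u v (- p)" for p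
    by (simp add: tau_def)
  have "- \<alpha> \<in> superdiff (tau X (\<lambda>w. - u w) v) (- q)"
    unfolding superdiff_iff tau_reflected
  proof
    fix y
    show "- q * - \<alpha> - tau X u v (- (- q)) \<le> y * - \<alpha> - tau X u v (- y)"
      using assms unfolding superdiff_iff by (auto dest: spec[of _ "- y"])
  qed
  then obtain w where "tau_minimizer X (\<lambda>w. - u w) v (- q) w" "- u w \<le> - \<alpha>"
    using reflected.ex_tau_minimizer_le_superdiff by blast
  then show ?thesis
    by (auto simp: tau_minimizer_def tau_reflected)
qed

lemma ex_superdiff_if_bounded_slopes:
  assumes "R > 0"
    and slopes: "\<And>q w. R \<le> \<bar>q\<bar> \<Longrightarrow> tau_minimizer X u v q w \<Longrightarrow> q * (u w - \<alpha>) < 0"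
  shows "\<exists>q0. \<alpha> \<in> superdiff (tau X u v) q0"
proof -
  define g where "g q = q * \<alpha> - tau X u v q" for q
  obtain w_pos where w_pos: "tau_minimizer X u v R w_pos"
    using ex_tau_minimizer by blast
  have "u w_pos < \<alpha>"
    using slopes[OF _ w_pos] \<open>R > 0\<close> by (simp add: mult_less_0_iff)
  have above: "g R \<le> g y" if "R \<le> y" for y
  proof -
    have "(y - R) * (u w_pos - \<alpha>) \<le> 0"
      using that \<open>u w_pos < \<alpha>\<close> by (simp add: mult_nonneg_nonpos)
    then show ?thesis
      using w_pos tau_le[of w_pos y] by (simp add: g_def tau_minimizer_def algebra_simps)
  qed
  obtain w_neg where w_neg: "tau_minimizer X u v (- R) w_neg"
    using ex_tau_minimizer by blast
  have "\<alpha> < u w_neg"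
    using slopes[OF _ w_neg] \<open>R > 0\<close> by (simp add: zero_less_mult_iff)
  have below: "g (- R) \<le> g y" if "y \<le> - R" for y
  proof -
    have "(y + R) * (u w_neg - \<alpha>) \<le> 0"
      using that \<open>\<alpha> < u w_neg\<close> by (simp add: mult_nonpos_nonneg)
    then show ?thesis
      using w_neg tau_le[of w_neg y] by (simp add: g_def tau_minimizer_def algebra_simps)
  qed
  have "continuous_on {- R..R} g"
    unfolding g_def by (intro continuous_intros continuous_on_tau)
  moreover have "{- R..R} \<noteq> {}"
    using \<open>R > 0\<close> by simp
  ultimately obtain q0 where q0: "\<And>y. y \<in> {- R..R} \<Longrightarrow> g q0 \<le> g y"
    using continuous_attains_inf[OF compact_Icc] by blast
  have "g q0 \<le> g y" for y
    using q0[of y] q0[of R] q0[of "- R"] above[of y] below[of y] \<open>R > 0\<close>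
    by (cases "y < - R" ; cases "R < y") auto
  then show ?thesis
    unfolding superdiff_iff g_def by blast
qed

lemma ex_far_tau_minimizer:
  assumes "\<And>q. \<alpha> \<notin> superdiff (tau X u v) q"
  shows "\<exists>q w. R \<le> \<bar>q\<bar> \<and> tau_minimizer X u v q w \<and> 0 \<le> q * (u w - \<alpha>)"
proof -
  have "\<exists>q w. max R 1 \<le> \<bar>q\<bar> \<and> tau_minimizer X u v q w \<and> \<not> q * (u w - \<alpha>) < 0"
    using ex_superdiff_if_bounded_slopes[of "max R 1" \<alpha>] assms by force
  then show ?thesis
    by (auto simp: not_less)
qed

lemma concave_conj_le_f_fun_if_no_superdiff:
  assumes conj: "concave_conj (\<lambda>q. ereal (tau X u v q)) \<alpha> = ereal L"
    and no_superdiff: "\<And>q. \<alpha> \<notin> superdiff (tau X u v) q"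
  shows "ereal L \<le> f_fun X u v \<alpha>"
proof -
  have L_le: "L \<le> q * \<alpha> - tau X u v q" for q
    using concave_conj_le[of "tau X u v" \<alpha> q] conj by simp
  define C where "C = - tau X u v 0 - L"
  txt \<open>A far minimizer at slope \<open>q\<close> has \<open>L \<le> v w\<close> and \<open>|q| |u w - \<alpha>| \<le> C\<close>; a point where
    the function below is nonnegative lies on the fibre \<open>u = \<alpha>\<close> with \<open>L \<le> v\<close>.\<close>
  have "\<exists>w\<in>topspace X. 0 \<le> min (v w + - L) (- \<bar>u w - \<alpha>\<bar>)"
  proof (rule usc_map_ge_if_approx[OF compact])
    show "usc_map X (\<lambda>w. min (v w + - L) (- \<bar>u w - \<alpha>\<bar>))"
      by (intro usc_map_min usc_map_add v_usc continuous_map_imp_usc_map continuous_intros u_continuous)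
  next
    fix e :: real
    assume "e > 0"
    obtain q w where "C / e + 1 \<le> \<bar>q\<bar>" and w: "tau_minimizer X u v q w"
      and slope: "0 \<le> q * (u w - \<alpha>)"
      using ex_far_tau_minimizer[OF no_superdiff] by blast
    then have "C < e * \<bar>q\<bar>"
      using \<open>e > 0\<close> by (simp add: field_simps)
    have v_eq: "v w = (q * \<alpha> - tau X u v q) + q * (u w - \<alpha>)"
      using w by (simp add: tau_minimizer_def algebra_simps)
    then have "L \<le> v w"
      using L_le[of q] slope by linarith
    moreover have "\<bar>u w - \<alpha>\<bar> < e"
    proof -
      have "v w \<le> - tau X u v 0"
        using w tau_le[of w 0] by (simp add: tau_minimizer_def)
      then have "\<bar>u w - \<alpha>\<bar> * \<bar>q\<bar> \<le> C"
        using v_eq L_le[of q] slope by (simp add: C_def abs_mult[symmetric] mult.commute)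
      with \<open>C < e * \<bar>q\<bar>\<close> have "\<bar>u w - \<alpha>\<bar> * \<bar>q\<bar> < e * \<bar>q\<bar>"
        by linarith
      then show ?thesis
        by (rule mult_right_less_imp_less) simp
    qed
    ultimately show "\<exists>w\<in>topspace X. 0 - e \<le> min (v w + - L) (- \<bar>u w - \<alpha>\<bar>)"
      using w \<open>e > 0\<close> unfolding tau_minimizer_def by (intro bexI[of _ w]) auto
  qed
  then obtain w where "w \<in> topspace X" "u w = \<alpha>" "L \<le> v w"
    by auto
  then show ?thesis
    using f_fun_ge[of w X v u] by (metis ereal_less_eq(3) order_trans)
qed

lemma concave_conj_le_f_fun:
  assumes "\<And>q. \<alpha> \<in> superdiff (tau X u v) q \<Longrightarrow> ereal (q * \<alpha> - tau X u v q) \<le> f_fun X u v \<alpha>"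
  shows "concave_conj (\<lambda>q. ereal (tau X u v q)) \<alpha> \<le> f_fun X u v \<alpha>"
proof (cases "concave_conj (\<lambda>q. ereal (tau X u v q)) \<alpha>" rule: ereal_cases)
  case (real L)
  show ?thesis
  proof (cases "\<exists>q. \<alpha> \<in> superdiff (tau X u v) q")
    case True
    then obtain q where "\<alpha> \<in> superdiff (tau X u v) q"
      by blast
    then have "concave_conj (\<lambda>q. ereal (tau X u v q)) \<alpha> = ereal (q * \<alpha> - tau X u v q)"
      by (simp add: superdiff_iff_concave_conj)
    with assms \<open>\<alpha> \<in> superdiff (tau X u v) q\<close> show ?thesis
      by simp
  next
    case False
    then have "ereal L \<le> f_fun X u v \<alpha>"
      using concave_conj_le_f_fun_if_no_superdiff[OF real] by blast
    then show ?thesis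
      using real by simp
  qed
next
  case PInf
  then show ?thesis
    using concave_conj_le[of "tau X u v" \<alpha> 0] by simp
qed simp

lemma superdiff_value_le_f_fun_if_concave:
  assumes "concave_ereal (f_fun X u v)" and "\<alpha> \<in> superdiff (tau X u v) q"
  shows "ereal (q * \<alpha> - tau X u v q) \<le> f_fun X u v \<alpha>"
proof -
  obtain w1 where w1: "tau_minimizer X u v q w1" "u w1 \<le> \<alpha>"
    using ex_tau_minimizer_le_superdiff[OF assms(2)] by blast
  obtain w2 where w2: "tau_minimizer X u v q w2" "\<alpha> \<le> u w2"
    using ex_tau_minimizer_ge_superdiff[OF assms(2)] by blast
  have "ereal (q * u w - tau X u v q) \<le> f_fun X u v (u w)" if "tau_minimizer X u v q w" for w
    using that f_fun_ge[of w X v u] by (simp add: tau_minimizer_def)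
  from this[OF w1(1)] this[OF w2(1)] show ?thesis
    using concave_ereal_ge_affine_between[OF assms(1) w1(2) w2(2), of q "- tau X u v q"] by simp
qed

lemma supported_iff_f_fun_eq_concave_conj:
  "(\<forall>q. \<forall>\<alpha> \<in> superdiff (tau X u v) q. supported X u v q \<alpha>)
     \<longleftrightarrow> (\<forall>\<alpha>. f_fun X u v \<alpha> = concave_conj (\<lambda>q. ereal (tau X u v q)) \<alpha>)"
proof (rule iffI[rotated])
  assume eq: "\<forall>\<alpha>. f_fun X u v \<alpha> = concave_conj (\<lambda>q. ereal (tau X u v q)) \<alpha>"
  show "\<forall>q. \<forall>\<alpha> \<in> superdiff (tau X u v) q. supported X u v q \<alpha>"
  proof (intro allI ballI)
    fix q \<alpha>
    assume "\<alpha> \<in> superdiff (tau X u v) q"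
    then have "f_fun X u v \<alpha> = ereal (q * \<alpha> - tau X u v q)"
      using eq by (simp add: superdiff_iff_concave_conj)
    then obtain w where "w \<in> topspace X" "u w = \<alpha>" "v w = q * \<alpha> - tau X u v q"
      using f_fun_attained by blast
    then show "supported X u v q \<alpha>"
      unfolding supported_def by (intro bexI[of _ w]) auto
  qed
next
  assume supp: "\<forall>q. \<forall>\<alpha> \<in> superdiff (tau X u v) q. supported X u v q \<alpha>"
  have "concave_conj (\<lambda>q. ereal (tau X u v q)) \<alpha> \<le> f_fun X u v \<alpha>" for \<alpha>
  proof (rule concave_conj_le_f_fun)
    fix q
    assume "\<alpha> \<in> superdiff (tau X u v) q"
    with supp have "supported X u v q \<alpha>"
      by blast
    then show "ereal (q * \<alpha> - tau X u v q) \<le> f_fun X u v \<alpha>"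
      by (simp add: f_fun_eq_if_supported(1))
  qed
  then show "\<forall>\<alpha>. f_fun X u v \<alpha> = concave_conj (\<lambda>q. ereal (tau X u v q)) \<alpha>"
    using f_fun_le_concave_conj by (simp add: order_antisym)
qed

lemma f_fun_eq_concave_conj_iff_concave:
  "(\<forall>\<alpha>. f_fun X u v \<alpha> = concave_conj (\<lambda>q. ereal (tau X u v q)) \<alpha>)
     \<longleftrightarrow> concave_ereal (f_fun X u v)"
proof
  assume "\<forall>\<alpha>. f_fun X u v \<alpha> = concave_conj (\<lambda>q. ereal (tau X u v q)) \<alpha>"
  then have "f_fun X u v = concave_conj (\<lambda>q. ereal (tau X u v q))"
    by blast
  then show "concave_ereal (f_fun X u v)"
    using concave_ereal_concave_conj by simp
next
  assume "concave_ereal (f_fun X u v)"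
  then have "concave_conj (\<lambda>q. ereal (tau X u v q)) \<alpha> \<le> f_fun X u v \<alpha>" for \<alpha>
    by (intro concave_conj_le_f_fun superdiff_value_le_f_fun_if_concave)
  then show "\<forall>\<alpha>. f_fun X u v \<alpha> = concave_conj (\<lambda>q. ereal (tau X u v q)) \<alpha>"
    using f_fun_le_concave_conj by (simp add: order_antisym)
qed

end

theorem propositionp:
  fixes X :: "'a topology" and u v :: "'a \<Rightarrow> real"
  assumes "compact_space X" and "Hausdorff_space X" and "topspace X \<noteq> {}"
    and "continuous_map X euclideanreal u"
    and "usc_map X v"
  shows "(\<forall>\<alpha>. f_fun X u v \<alpha> \<le> concave_conj (\<lambda>q. ereal (tau X u v q)) \<alpha>)
       \<and> (\<forall>q \<alpha>. supported X u v q \<alpha> \<longrightarrow>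
            f_fun X u v \<alpha> = ereal (q * \<alpha> - tau X u v q)
          \<and> ereal (q * \<alpha> - tau X u v q) = concave_conj (\<lambda>q. ereal (tau X u v q)) \<alpha>)
       \<and> ((\<forall>q. \<forall>\<alpha> \<in> superdiff (tau X u v) q. supported X u v q \<alpha>)
            \<longleftrightarrow> (\<forall>\<alpha>. f_fun X u v \<alpha> = concave_conj (\<lambda>q. ereal (tau X u v q)) \<alpha>))
       \<and> ((\<forall>\<alpha>. f_fun X u v \<alpha> = concave_conj (\<lambda>q. ereal (tau X u v q)) \<alpha>)
            \<longleftrightarrow> concave_ereal (f_fun X u v))"
proof -
  interpret compact_usc X u v
    using assms by unfold_locales
  show ?thesis
    using f_fun_le_concave_conj f_fun_eq_if_supported
      supported_iff_f_fun_eq_concave_conj f_fun_eq_concave_conj_iff_concave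
    by (intro conjI allI impI) auto
qed

end
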